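(* Let $f:\mathbb{R}^{d+1}\to\mathbb{R}$ be bounded and uniformly continuous, let $\{\eta_k,k\ge0\}$ be a stationary ergodic sequence of real random variables, and let $\{\xi_n(t),t\ge0\}_{n\ge1}$ be continuous $\mathbb{R}^d$-valued processes, defined on the same probability space as $\{\eta_k\}$, such that for some process $\xi(t)$, $t\ge0$, and every $T>0$, $\lim_{n\to\infty}\sup_{t\in[0,T]}|\xi_n(t)-\xi(t)|=0$ almost surely. Then for every $T>0$, $$\frac1n\sum_{k\le nT}f\Big(\xi_n\big(\tfrac kn\big),\eta_k\Big)\ \longrightarrow\ \int_0^T\bar f(\xi(t))\,dt\quad\text{almost surely as }n\to\infty,$$ where $\bar f(x)=\mathbb{E}f(x,\eta_0)$. *)

theory Defs
  imports "HOL-Probability.Probability"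
begin

abbreviation seq_space :: "(nat \<Rightarrow> real) measure" where
  "seq_space \<equiv> PiM UNIV (\<lambda>_. borel)"

definition stationary_seq :: "'a measure \<Rightarrow> (nat \<Rightarrow> 'a \<Rightarrow> real) \<Rightarrow> bool" where
  "stationary_seq M \<eta> \<longleftrightarrow>
     (\<forall>k. \<eta> k \<in> borel_measurable M) \<and>
     (\<forall>m. distr M seq_space (\<lambda>\<omega> k. \<eta> (k + m) \<omega>) = distr M seq_space (\<lambda>\<omega> k. \<eta> k \<omega>))"

definition ergodic_seq :: "'a measure \<Rightarrow> (nat \<Rightarrow> 'a \<Rightarrow> real) \<Rightarrow> bool" where
  "ergodic_seq M \<eta> \<longleftrightarrow>
     (\<forall>A \<in> sets seq_space.
        (\<lambda>x k. x (Suc k)) -` A \<inter> space seq_space = A \<longrightarrow>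
        measure M {\<omega> \<in> space M. (\<lambda>k. \<eta> k \<omega>) \<in> A} \<in> {0, 1})"

end

theory Submission
  imports Defs
begin

text \<open>Birkhoff's ergodic theorem, proved below for bounded functions of a stationary ergodic
  sequence via Garsia's maximal inequality, yields an almost sure event on which
  \<open>(1/N) \<Sum>k<N. f (y, \<eta> k)\<close> tends to \<open>F y = E f (y, \<eta> 0)\<close> simultaneously for all \<open>y\<close> in a
  countable dense set.  On that event the claim is deterministic: cut \<open>[0, T]\<close> into cells of
  mesh \<open>h\<close> and replace \<open>\<xi>n n (k/n)\<close> on each cell by one nearby point \<open>y\<close> of the dense set.  In
  the limit each cell then contributes \<open>h F y\<close>, a Riemann sum for the integral of \<open>F (\<xi> t)\<close>,
  while uniform continuity of \<open>f\<close> and the uniform convergence of \<open>\<xi>n n\<close> keep the replacement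
  error small uniformly in \<open>n\<close>.\<close>

section \<open>Garsia's maximal ergodic inequality\<close>

(* max_partial_sum h n x is the largest of the partial sums \<Sum>i<k. h (x i), 0 \<le> k \<le> n. *)
fun max_partial_sum :: "(real \<Rightarrow> real) \<Rightarrow> nat \<Rightarrow> (nat \<Rightarrow> real) \<Rightarrow> real" where
  "max_partial_sum h 0 x = 0"
| "max_partial_sum h (Suc n) x = max 0 (h (x 0) + max_partial_sum h n (\<lambda>k. x (Suc k)))"

lemma max_partial_sum_nonneg: "0 \<le> max_partial_sum h n x"
  by (cases n) auto

lemma max_partial_sum_le_Suc: "max_partial_sum h n x \<le> max_partial_sum h (Suc n) x"
proof (induction n arbitrary: x)
  case (Suc n)
  show ?case
    by (subst (1 2) max_partial_sum.simps(2)) (intro max.mono add_left_mono order.refl Suc.IH)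
qed simp

lemma sum_le_max_partial_sum: "k \<le> n \<Longrightarrow> (\<Sum>i<k. h (x i)) \<le> max_partial_sum h n x"
proof (induction n arbitrary: k x)
  case (Suc n)
  show ?case
  proof (cases k)
    case 0
    then show ?thesis by (simp add: max_partial_sum_nonneg)
  next
    case (Suc k')
    then have "(\<Sum>i<k. h (x i)) = h (x 0) + (\<Sum>i<k'. h (x (Suc i)))"
      by (simp only: sum.lessThan_Suc_shift)
    also have "\<dots> \<le> h (x 0) + max_partial_sum h n (\<lambda>i. x (Suc i))"
      using Suc.IH[of k'] Suc.prems Suc by simp
    finally show ?thesis by simp
  qed
qed simp

lemma max_partial_sum_le:
  assumes "\<And>y. h y \<le> K" and "0 \<le> K"
  shows "max_partial_sum h n x \<le> real n * K"
proof (induction n arbitrary: x)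
  case (Suc n)
  have "h (x 0) + max_partial_sum h n (\<lambda>k. x (Suc k)) \<le> K + real n * K"
    using assms(1) Suc.IH by (rule add_mono)
  then show ?case using assms(2) by (simp add: algebra_simps)
qed simp

lemma seq_shift_measurable: "(\<lambda>x k. x (Suc k)) \<in> measurable seq_space seq_space"
  by (rule measurable_PiM_single') auto

lemma max_partial_sum_measurable [measurable]:
  assumes [measurable]: "h \<in> borel_measurable borel"
  shows "max_partial_sum h n \<in> borel_measurable seq_space"
proof (induction n)
  case (Suc n)
  have [measurable]: "(\<lambda>x. max_partial_sum h n (\<lambda>k. x (Suc k))) \<in> borel_measurable seq_space"
    using measurable_compose[OF seq_shift_measurable Suc.IH] by simp
  show ?case by simp
qed simp

lemma stationary_seq_measurable:
  "stationary_seq M \<eta> \<Longrightarrow> \<eta> k \<in> borel_measurable M"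
  unfolding stationary_seq_def by auto

lemma stationary_seq_shift_measurable:
  assumes "stationary_seq M \<eta>"
  shows "(\<lambda>\<omega> k. \<eta> (k + m) \<omega>) \<in> measurable M seq_space"
  by (rule measurable_PiM_single') (auto intro: stationary_seq_measurable[OF assms])

lemma stationary_seq_path_measurable:
  "stationary_seq M \<eta> \<Longrightarrow> (\<lambda>\<omega> k. \<eta> k \<omega>) \<in> measurable M seq_space"
  using stationary_seq_shift_measurable[of M \<eta> 0] by simp

text \<open>Garsia's proof: writing \<open>S\<^sub>n\<close> for \<open>max_partial_sum h n\<close> and \<open>x'\<close> for the shifted path,
  \<open>S\<^sub>n x \<le> S\<^sub>n\<^sub>+\<^sub>1 x = max 0 (h (x 0) + S\<^sub>n x')\<close>, so \<open>S\<^sub>n x - S\<^sub>n x'\<close> is at most \<open>h (x 0)\<close> on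
  \<open>{S\<^sub>n x > 0}\<close> and at most \<open>0\<close> elsewhere; by stationarity \<open>S\<^sub>n x\<close> and \<open>S\<^sub>n x'\<close> have the same
  expectation.\<close>
lemma maximal_ergodic_inequality:
  assumes "prob_space M" and st: "stationary_seq M \<eta>"
    and [measurable]: "h \<in> borel_measurable borel" and K: "\<And>y. \<bar>h y\<bar> \<le> K"
  shows "0 \<le> (\<integral>\<omega>. (if 0 < max_partial_sum h n (\<lambda>k. \<eta> k \<omega>) then h (\<eta> 0 \<omega>) else 0) \<partial>M)"
proof -
  interpret prob_space M by fact
  note [measurable] = stationary_seq_measurable[OF st]
  define X where "X = (\<lambda>\<omega> k. \<eta> (k + 0) \<omega>)"
  define Y where "Y = (\<lambda>\<omega> k. \<eta> (k + 1) \<omega>)"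
  have [measurable]: "X \<in> measurable M seq_space" "Y \<in> measurable M seq_space"
    unfolding X_def Y_def by (intro stationary_seq_shift_measurable st)+
  have "distr M seq_space Y = distr M seq_space X"
    using st unfolding stationary_seq_def X_def Y_def by (simp only: add_0_right)
  then have same_mean: "(\<integral>\<omega>. max_partial_sum h n (Y \<omega>) \<partial>M) = (\<integral>\<omega>. max_partial_sum h n (X \<omega>) \<partial>M)"
    using integral_distr[of Y M seq_space "max_partial_sum h n"]
      integral_distr[of X M seq_space "max_partial_sum h n"] by simp
  define I where "I \<omega> = (if 0 < max_partial_sum h n (X \<omega>) then h (\<eta> 0 \<omega>) else 0)" for \<omega>
  have garsia: "max_partial_sum h n (X \<omega>) \<le> I \<omega> + max_partial_sum h n (Y \<omega>)" for \<omega>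
  proof -
    have "max_partial_sum h n (X \<omega>) \<le> max_partial_sum h (Suc n) (X \<omega>)"
      by (rule max_partial_sum_le_Suc)
    also have "\<dots> = max 0 (h (\<eta> 0 \<omega>) + max_partial_sum h n (Y \<omega>))"
      by (simp add: X_def Y_def)
    finally show ?thesis
      using max_partial_sum_nonneg[of h n "Y \<omega>"] unfolding I_def by (auto simp: max_def split: if_splits)
  qed
  have K0: "0 \<le> K" using order_trans[OF abs_ge_zero K] .
  have bound: "\<bar>max_partial_sum h n x\<bar> \<le> real n * K" for x
    using max_partial_sum_le[of h K n x] max_partial_sum_nonneg[of h n x] K K0
    by (simp add: abs_le_iff)
  have [simp]: "integrable M (\<lambda>\<omega>. max_partial_sum h n (Z \<omega>))"
    if [measurable]: "Z \<in> measurable M seq_space" for Z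
    by (rule integrable_const_bound[where B = "real n * K"]) (auto simp: bound)
  have [simp]: "integrable M I"
    using K K0 by (intro integrable_const_bound[where B = K]) (auto simp: I_def[abs_def])
  have "(\<integral>\<omega>. max_partial_sum h n (X \<omega>) \<partial>M) \<le> (\<integral>\<omega>. I \<omega> + max_partial_sum h n (Y \<omega>) \<partial>M)"
    by (intro integral_mono garsia) simp_all
  then have "0 \<le> integral\<^sup>L M I"
    using same_mean by simp
  then show ?thesis unfolding I_def X_def by simp
qed

lemma expectation_nonneg_if_AE_partial_sum_pos:
  fixes h :: "real \<Rightarrow> real"
  assumes "prob_space M" and st: "stationary_seq M \<eta>"
    and [measurable]: "h \<in> borel_measurable borel" and K: "\<And>y. \<bar>h y\<bar> \<le> K"
    and pos: "AE \<omega> in M. \<exists>k. 0 < (\<Sum>i<k. h (\<eta> i \<omega>))"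
  shows "0 \<le> prob_space.expectation M (\<lambda>\<omega>. h (\<eta> 0 \<omega>))"
proof -
  interpret prob_space M by fact
  note [measurable] = stationary_seq_measurable[OF st] stationary_seq_path_measurable[OF st]
  define s where "s n \<omega> = (if 0 < max_partial_sum h n (\<lambda>k. \<eta> k \<omega>) then h (\<eta> 0 \<omega>) else 0)"
    for n \<omega>
  have "(\<lambda>n. integral\<^sup>L M (s n)) \<longlonglongrightarrow> expectation (\<lambda>\<omega>. h (\<eta> 0 \<omega>))"
  proof (rule integral_dominated_convergence[where w = "\<lambda>_. K"])
    show "AE \<omega> in M. (\<lambda>n. s n \<omega>) \<longlonglongrightarrow> h (\<eta> 0 \<omega>)"
      using pos
    proof eventually_elim
      case (elim \<omega>)
      then obtain k where k: "0 < (\<Sum>i<k. h (\<eta> i \<omega>))" by blast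
      have "s n \<omega> = h (\<eta> 0 \<omega>)" if "k \<le> n" for n
        using sum_le_max_partial_sum[OF that, of h "\<lambda>i. \<eta> i \<omega>"] k by (auto simp: s_def)
      then show ?case
        by (intro tendsto_eventually) (auto simp: eventually_sequentially)
    qed
  qed (use K order_trans[OF abs_ge_zero K] in \<open>auto simp: s_def[abs_def]\<close>)
  moreover have "0 \<le> integral\<^sup>L M (s n)" for n
    unfolding s_def by (rule maximal_ergodic_inequality[OF \<open>prob_space M\<close> st _ K]) simp
  ultimately show ?thesis
    by (blast intro: LIMSEQ_le_const)
qed

section \<open>Birkhoff's ergodic theorem for bounded observables\<close>

definition time_average :: "(real \<Rightarrow> real) \<Rightarrow> nat \<Rightarrow> (nat \<Rightarrow> real) \<Rightarrow> real" where
  "time_average g n x = (1 / real n) * (\<Sum>k<n. g (x k))"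

lemma abs_time_average_le:
  assumes "\<And>y. \<bar>g y\<bar> \<le> K"
  shows "\<bar>time_average g n x\<bar> \<le> K"
proof (cases "n = 0")
  case True
  then show ?thesis using order_trans[OF abs_ge_zero assms] by (simp add: time_average_def)
next
  case False
  have "\<bar>\<Sum>k<n. g (x k)\<bar> \<le> (\<Sum>k<n. \<bar>g (x k)\<bar>)"
    by (rule sum_abs)
  also have "\<dots> \<le> real n * K"
    using sum_mono[of "{..<n}" "\<lambda>k. \<bar>g (x k)\<bar>" "\<lambda>_. K"] assms by simp
  finally have "\<bar>\<Sum>k<n. g (x k)\<bar> \<le> real n * K" .
  then show ?thesis using False by (simp add: time_average_def abs_mult field_simps)
qed

lemma limsup_time_average_shift:
  assumes K: "\<And>y. \<bar>g y\<bar> \<le> K"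
  shows "limsup (\<lambda>n. ereal (time_average g n (\<lambda>k. x (Suc k)))) = limsup (\<lambda>n. ereal (time_average g n x))"
proof -
  define d where "d n = time_average g (Suc n) x - time_average g n (\<lambda>k. x (Suc k))" for n
  have d_eq: "d n = (g (x 0) - time_average g n (\<lambda>k. x (Suc k))) / (real n + 1)" for n
  proof -
    have "time_average g (Suc n) x = (g (x 0) + (\<Sum>k<n. g (x (Suc k)))) / (real n + 1)"
      unfolding time_average_def sum.lessThan_Suc_shift by simp
    then show ?thesis
      by (cases "n = 0") (simp_all add: d_def time_average_def field_simps)
  qed
  have "d \<longlonglongrightarrow> 0"
  proof (rule Lim_null_comparison)
    show "\<forall>\<^sub>F n in sequentially. norm (d n) \<le> 2 * K / (real n + 1)"
    proof (intro always_eventually allI)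
      fix n
      have "\<bar>g (x 0) - time_average g n (\<lambda>k. x (Suc k))\<bar> \<le> 2 * K"
        using K[of "x 0"] abs_time_average_le[of g K n "\<lambda>k. x (Suc k)", OF K] by linarith
      then show "norm (d n) \<le> 2 * K / (real n + 1)"
        unfolding d_eq by (simp add: divide_right_mono)
    qed
    show "(\<lambda>n. 2 * K / (real n + 1)) \<longlonglongrightarrow> 0"
      using LIMSEQ_Suc[OF lim_const_over_n[of "2 * K"]] by (simp add: add.commute)
  qed
  then have d: "(\<lambda>n. ereal (d n)) \<longlonglongrightarrow> ereal 0"
    by (simp add: lim_ereal)
  have "limsup (\<lambda>n. ereal (time_average g n x)) = limsup (\<lambda>n. ereal (time_average g (Suc n) x))"
    using limsup_shift[of "\<lambda>n. ereal (time_average g n x)"] by simp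
  also have "\<dots> = limsup (\<lambda>n. ereal (d n) + ereal (time_average g n (\<lambda>k. x (Suc k))))"
    by (simp add: d_def)
  also have "\<dots> = limsup (\<lambda>n. ereal (time_average g n (\<lambda>k. x (Suc k))))"
    by (subst ereal_limsup_lim_add[OF d]) simp_all
  finally show ?thesis ..
qed

lemma time_average_measurable [measurable]:
  assumes [measurable]: "g \<in> borel_measurable borel"
  shows "time_average g n \<in> borel_measurable seq_space"
  unfolding time_average_def by measurable

lemma expectation_ge_if_AE_limsup_time_average_gt:
  fixes g :: "real \<Rightarrow> real"
  assumes "prob_space M" and st: "stationary_seq M \<eta>"
    and [measurable]: "g \<in> borel_measurable borel" and K: "\<And>y. \<bar>g y\<bar> \<le> K"
    and gt: "AE \<omega> in M. ereal c < limsup (\<lambda>n. ereal (time_average g n (\<lambda>k. \<eta> k \<omega>)))"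
  shows "c \<le> prob_space.expectation M (\<lambda>\<omega>. g (\<eta> 0 \<omega>))"
proof -
  interpret prob_space M by fact
  note [measurable] = stationary_seq_measurable[OF st]
  from gt have pos: "AE \<omega> in M. \<exists>n. 0 < (\<Sum>i<n. g (\<eta> i \<omega>) - c)"
  proof eventually_elim
    case (elim \<omega>)
    then have "ereal c < limsup (\<lambda>n. ereal (time_average g (Suc n) (\<lambda>k. \<eta> k \<omega>)))"
      using limsup_shift[of "\<lambda>n. ereal (time_average g n (\<lambda>k. \<eta> k \<omega>))"] by simp
    then obtain n where "c < time_average g (Suc n) (\<lambda>k. \<eta> k \<omega>)"
      by (auto dest: Limsup_obtain)
    then have "0 < (\<Sum>i<Suc n. g (\<eta> i \<omega>) - c)"
      by (simp add: time_average_def sum_subtractf field_simps)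
    then show ?case ..
  qed
  have "\<bar>g y - c\<bar> \<le> K + \<bar>c\<bar>" for y
    using K[of y] by linarith
  from expectation_nonneg_if_AE_partial_sum_pos[OF \<open>prob_space M\<close> st _ this pos]
  have "0 \<le> expectation (\<lambda>\<omega>. g (\<eta> 0 \<omega>) - c)"
    by simp
  moreover have "integrable M (\<lambda>\<omega>. g (\<eta> 0 \<omega>))"
    using K by (intro integrable_const_bound[where B = K]) auto
  ultimately show ?thesis
    by (simp add: prob_space)
qed

text \<open>The event that the limsup of the time averages exceeds \<open>c\<close> is shift invariant, so by
  ergodicity it has probability 0 or 1, and probability 1 is excluded by the previous lemma.\<close>
lemma AE_limsup_time_average_le:
  fixes g :: "real \<Rightarrow> real"
  assumes "prob_space M" and st: "stationary_seq M \<eta>" and erg: "ergodic_seq M \<eta>"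
    and [measurable]: "g \<in> borel_measurable borel" and K: "\<And>y. \<bar>g y\<bar> \<le> K"
    and less: "prob_space.expectation M (\<lambda>\<omega>. g (\<eta> 0 \<omega>)) < c"
  shows "AE \<omega> in M. limsup (\<lambda>n. ereal (time_average g n (\<lambda>k. \<eta> k \<omega>))) \<le> ereal c"
proof -
  interpret prob_space M by fact
  note [measurable] = stationary_seq_path_measurable[OF st]
  define L where "L x = limsup (\<lambda>n. ereal (time_average g n x))" for x
  have [measurable]: "L \<in> borel_measurable seq_space"
    unfolding L_def by measurable
  define B where "B = {x \<in> space seq_space. ereal c < L x}"
  have B: "B \<in> sets seq_space"
    unfolding B_def by measurable
  have "(\<lambda>x k. x (Suc k)) -` B \<inter> space seq_space = B"
    unfolding B_def L_def using limsup_time_average_shift[of g K, OF K] by (auto simp: space_PiM)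
  then have "measure M {\<omega> \<in> space M. (\<lambda>k. \<eta> k \<omega>) \<in> B} \<in> {0, 1}"
    using erg B unfolding ergodic_seq_def by blast
  moreover have "measure M {\<omega> \<in> space M. (\<lambda>k. \<eta> k \<omega>) \<in> B} \<noteq> 1"
  proof
    assume "measure M {\<omega> \<in> space M. (\<lambda>k. \<eta> k \<omega>) \<in> B} = 1"
    then have "AE \<omega> in M. \<omega> \<in> {\<omega> \<in> space M. (\<lambda>k. \<eta> k \<omega>) \<in> B}"
      by (rule AE_prob_1)
    then have "AE \<omega> in M. ereal c < limsup (\<lambda>n. ereal (time_average g n (\<lambda>k. \<eta> k \<omega>)))"
      by eventually_elim (simp add: B_def L_def)
    from expectation_ge_if_AE_limsup_time_average_gt[where g = g and K = K, OF \<open>prob_space M\<close> st _ K this]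
    show False
      using less by simp
  qed
  ultimately have "{\<omega> \<in> space M. (\<lambda>k. \<eta> k \<omega>) \<in> B} \<in> null_sets M"
    using B by (auto simp: null_sets_def emeasure_eq_measure)
  from AE_not_in[OF this] AE_space show ?thesis
    by eventually_elim (auto simp: B_def L_def space_PiM not_less)
qed

lemma AE_eventually_time_average_less:
  fixes g :: "real \<Rightarrow> real"
  assumes "prob_space M" and "stationary_seq M \<eta>" and "ergodic_seq M \<eta>"
    and "g \<in> borel_measurable borel" and "\<And>y. \<bar>g y\<bar> \<le> K"
    and less: "prob_space.expectation M (\<lambda>\<omega>. g (\<eta> 0 \<omega>)) < c"
  shows "AE \<omega> in M. \<forall>\<^sub>F n in sequentially. time_average g n (\<lambda>k. \<eta> k \<omega>) < c"
proof -
  define c' where "c' = (prob_space.expectation M (\<lambda>\<omega>. g (\<eta> 0 \<omega>)) + c) / 2"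
  have "prob_space.expectation M (\<lambda>\<omega>. g (\<eta> 0 \<omega>)) < c'" "c' < c"
    using less by (auto simp: c'_def)
  from AE_limsup_time_average_le[OF assms(1-5) this(1)] show ?thesis
  proof eventually_elim
    case (elim \<omega>)
    then have "limsup (\<lambda>n. ereal (time_average g n (\<lambda>k. \<eta> k \<omega>))) < ereal c"
      using \<open>c' < c\<close> by (simp add: le_less_trans)
    then show ?case
      by (auto dest: Limsup_lessD elim: eventually_mono)
  qed
qed

theorem birkhoff_ergodic_bounded:
  fixes g :: "real \<Rightarrow> real"
  assumes "prob_space M" and st: "stationary_seq M \<eta>" and "ergodic_seq M \<eta>"
    and [measurable]: "g \<in> borel_measurable borel" and K: "\<And>y. \<bar>g y\<bar> \<le> K"
  shows "AE \<omega> in M. (\<lambda>n. time_average g n (\<lambda>k. \<eta> k \<omega>)) \<longlonglongrightarrow> prob_space.expectation M (\<lambda>\<omega>. g (\<eta> 0 \<omega>))"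
proof -
  interpret prob_space M by fact
  note [measurable] = stationary_seq_measurable[OF st]
  define E where "E = expectation (\<lambda>\<omega>. g (\<eta> 0 \<omega>))"
  have neg: "time_average (\<lambda>y. - g y) n x = - time_average g n x" for n x
    by (simp add: time_average_def sum_negf)
  have upper: "AE \<omega> in M. \<forall>j::nat. \<forall>\<^sub>F n in sequentially.
      time_average g n (\<lambda>k. \<eta> k \<omega>) < E + 1 / real (Suc j)"
    unfolding AE_all_countable E_def
    by (intro allI AE_eventually_time_average_less[OF assms]) simp
  have lower: "AE \<omega> in M. \<forall>j::nat. \<forall>\<^sub>F n in sequentially.
      - time_average g n (\<lambda>k. \<eta> k \<omega>) < - E + 1 / real (Suc j)"
    unfolding AE_all_countable E_def neg[symmetric]
    by (intro allI AE_eventually_time_average_less[OF assms(1-3), of _ K]) (use K in simp_all)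
  from upper lower have "AE \<omega> in M. \<forall>j::nat. \<forall>\<^sub>F n in sequentially.
      time_average g n (\<lambda>k. \<eta> k \<omega>) < E + 1 / real (Suc j) \<and>
      - time_average g n (\<lambda>k. \<eta> k \<omega>) < - E + 1 / real (Suc j)"
    by eventually_elim (simp add: eventually_conj_iff)
  then show ?thesis
  proof eventually_elim
    case (elim \<omega>)
    show ?case unfolding E_def[symmetric]
    proof (rule tendstoI)
      fix r :: real assume "r > 0"
      then obtain j where "inverse (real (Suc j)) < r"
        using reals_Archimedean by blast
      with elim[rule_format, of j] show "\<forall>\<^sub>F n in sequentially. dist (time_average g n (\<lambda>k. \<eta> k \<omega>)) E < r"
        by (auto simp: dist_real_def abs_less_iff inverse_eq_divide elim!: eventually_mono)
    qed
  qed
qed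

section \<open>Averages over rescaled index ranges\<close>

lemma nat_le_real_eq_lessThan:
  assumes "0 \<le> y"
  shows "{k::nat. real k \<le> y} = {..<nat \<lfloor>y\<rfloor> + 1}"
proof -
  have "real k \<le> y \<longleftrightarrow> k < nat \<lfloor>y\<rfloor> + 1" for k
  proof -
    have "real k \<le> y \<longleftrightarrow> int k \<le> \<lfloor>y\<rfloor>" by (simp add: le_floor_iff)
    also have "\<dots> \<longleftrightarrow> k \<le> nat \<lfloor>y\<rfloor>" using assms by linarith
    finally show ?thesis by (simp add: less_Suc_eq_le)
  qed
  then show ?thesis by auto
qed

lemma finite_nat_le_real [simp]: "finite {k::nat. real k \<le> y}"
proof (rule finite_subset)
  show "{k. real k \<le> y} \<subseteq> {k. real k \<le> \<bar>y\<bar>}" by auto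
  show "finite {k::nat. real k \<le> \<bar>y\<bar>}" by (simp add: nat_le_real_eq_lessThan)
qed

lemma LIMSEQ_average_scaled:
  fixes b :: "nat \<Rightarrow> real"
  assumes lim: "(\<lambda>N. (1 / real N) * (\<Sum>k<N. b k)) \<longlonglongrightarrow> L" and "0 \<le> a"
  shows "(\<lambda>n. (1 / real n) * (\<Sum>k\<in>{k. real k \<le> real n * a}. b k)) \<longlonglongrightarrow> a * L"
proof (cases "a = 0")
  case True
  then show ?thesis
    using lim_const_over_n[of "b 0"] by simp
next
  case False
  with \<open>0 \<le> a\<close> have "0 < a" by simp
  define N where "N n = nat \<lfloor>real n * a\<rfloor> + 1" for n
  have range_eq: "{k. real k \<le> real n * a} = {..<N n}" for n
    unfolding N_def using \<open>0 \<le> a\<close> by (intro nat_le_real_eq_lessThan) simp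
  have N_bounds: "real n * a < real (N n)" "real (N n) \<le> real n * a + 1" for n
    using \<open>0 \<le> a\<close> by (simp_all add: N_def) linarith+
  have "(\<lambda>n. real (N n) / real n) \<longlonglongrightarrow> a"
  proof (rule real_tendsto_sandwich)
    show "\<forall>\<^sub>F n in sequentially. a \<le> real (N n) / real n"
      "\<forall>\<^sub>F n in sequentially. real (N n) / real n \<le> a + 1 / real n"
      using eventually_gt_at_top[of 0]
      by (eventually_elim, use N_bounds in \<open>auto simp: field_simps less_imp_le\<close>)+
    show "(\<lambda>n. a + 1 / real n) \<longlonglongrightarrow> a"
      using tendsto_add[OF tendsto_const lim_const_over_n[of 1]] by simp
  qed simp
  moreover have "filterlim N at_top sequentially"
    unfolding filterlim_at_top eventually_sequentially
  proof
    fix Z :: nat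
    obtain n0 :: nat where n0: "real Z / a < real n0"
      using reals_Archimedean2 by blast
    have "Z \<le> N n" if "n0 \<le> n" for n
    proof -
      have "real Z < real n0 * a" using n0 \<open>0 < a\<close> by (simp add: field_simps)
      also have "\<dots> \<le> real n * a" using that \<open>0 < a\<close> by (simp add: mult_right_mono)
      also have "\<dots> < real (N n)" by (rule N_bounds)
      finally show ?thesis by simp
    qed
    then show "\<exists>n0. \<forall>n\<ge>n0. Z \<le> N n" by blast
  qed
  then have "(\<lambda>n. (1 / real (N n)) * (\<Sum>k<N n. b k)) \<longlonglongrightarrow> L"
    using filterlim_compose[OF lim] by (simp add: o_def)
  ultimately have "(\<lambda>n. (real (N n) / real n) * ((1 / real (N n)) * (\<Sum>k<N n. b k))) \<longlonglongrightarrow> a * L"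
    by (rule tendsto_mult)
  then show ?thesis
    by (simp add: range_eq N_def)
qed

definition grid_block :: "nat \<Rightarrow> real \<Rightarrow> nat \<Rightarrow> nat set" where
  "grid_block n h j = {k. real n * (real j * h) < real k \<and> real k \<le> real n * (real (Suc j) * h)}"

lemma grid_block_eq_Diff:
  assumes "0 \<le> h"
  shows "grid_block n h j = {k. real k \<le> real n * (real (Suc j) * h)} - {k. real k \<le> real n * (real j * h)}"
  unfolding grid_block_def by auto

lemma finite_grid_block [simp]: "finite (grid_block n h j)"
  unfolding grid_block_def by (rule finite_subset[OF _ finite_nat_le_real]) auto

lemma sum_split_grid_blocks:
  fixes g :: "nat \<Rightarrow> 'a::comm_monoid_add"
  assumes "0 \<le> h"
  shows "(\<Sum>k\<in>{k. real k \<le> real n * (real m * h)}. g k) = g 0 + (\<Sum>j<m. \<Sum>k\<in>grid_block n h j. g k)"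
proof (induction m)
  case 0
  then show ?case by simp
next
  case (Suc m)
  have "{k. real k \<le> real n * (real (Suc m) * h)} = {k. real k \<le> real n * (real m * h)} \<union> grid_block n h m"
    using mult_left_mono[OF mult_right_mono[OF _ assms], of "real m" "real (Suc m)" "real n"]
    unfolding grid_block_def by force
  moreover have "{k. real k \<le> real n * (real m * h)} \<inter> grid_block n h m = {}"
    unfolding grid_block_def by auto
  ultimately show ?case
    by (simp add: sum.union_disjoint Suc.IH add.assoc)
qed

lemma nat_ceiling_divide_grid_block:
  assumes "k \<in> grid_block n h j"
  shows "nat \<lceil>real k / real n / h\<rceil> = Suc j"
proof -
  from assms have cell: "real n * (real j * h) < real k" "real k \<le> real n * (real (Suc j) * h)"
    by (simp_all add: grid_block_def)
  then have "0 < real n * h"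
    by (simp add: algebra_simps)
  then have "0 < real n" "0 < h"
    by (auto simp: zero_less_mult_iff)
  with cell have "real j < real k / real n / h" "real k / real n / h \<le> real (Suc j)"
    by (simp_all add: field_simps)
  then have "\<lceil>real k / real n / h\<rceil> = int (Suc j)"
    by (simp add: ceiling_eq_iff)
  then show ?thesis by simp
qed

lemma LIMSEQ_grid_block_average:
  fixes b :: "nat \<Rightarrow> real"
  assumes lim: "(\<lambda>N. (1 / real N) * (\<Sum>k<N. b k)) \<longlonglongrightarrow> L" and "0 \<le> h"
  shows "(\<lambda>n. (1 / real n) * (\<Sum>k\<in>grid_block n h j. b k)) \<longlonglongrightarrow> h * L"
proof -
  have sub: "{k. real k \<le> real n * (real j * h)} \<subseteq> {k. real k \<le> real n * (real (Suc j) * h)}" for n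
    using mult_left_mono[OF mult_right_mono[OF _ \<open>0 \<le> h\<close>], of "real j" "real (Suc j)" "real n"]
    by auto
  have "(\<Sum>k\<in>grid_block n h j. b k)
        = (\<Sum>k\<in>{k. real k \<le> real n * (real (Suc j) * h)}. b k) - (\<Sum>k\<in>{k. real k \<le> real n * (real j * h)}. b k)"
    for n
    unfolding grid_block_eq_Diff[OF \<open>0 \<le> h\<close>] by (rule sum_diff[OF finite_nat_le_real sub])
  then have eq: "(1 / real n) * (\<Sum>k\<in>grid_block n h j. b k)
        = (1 / real n) * (\<Sum>k\<in>{k. real k \<le> real n * (real (Suc j) * h)}. b k)
          - (1 / real n) * (\<Sum>k\<in>{k. real k \<le> real n * (real j * h)}. b k)" for n
    by (simp add: right_diff_distrib)
  have "(\<lambda>n. (1 / real n) * (\<Sum>k\<in>{k. real k \<le> real n * (real (Suc j) * h)}. b k)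
            - (1 / real n) * (\<Sum>k\<in>{k. real k \<le> real n * (real j * h)}. b k))
        \<longlonglongrightarrow> real (Suc j) * h * L - real j * h * L"
    using \<open>0 \<le> h\<close> by (intro tendsto_diff LIMSEQ_average_scaled[OF lim]) simp_all
  then show ?thesis
    unfolding eq by (simp add: algebra_simps)
qed

lemma LIMSEQ_step_average:
  fixes g :: "nat \<Rightarrow> nat \<Rightarrow> real"
  assumes "0 < h" and lim: "\<And>j. (\<lambda>N. (1 / real N) * (\<Sum>k<N. g j k)) \<longlonglongrightarrow> G j"
  shows "(\<lambda>n. (1 / real n) * (\<Sum>k\<in>{k. real k \<le> real n * (real m * h)}. g (nat \<lceil>real k / real n / h\<rceil>) k))
           \<longlonglongrightarrow> (\<Sum>j<m. h * G (Suc j))"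
proof -
  have "(\<Sum>k\<in>grid_block n h j. g (nat \<lceil>real k / real n / h\<rceil>) k) = (\<Sum>k\<in>grid_block n h j. g (Suc j) k)"
    for n j
    by (intro sum.cong refl) (simp only: nat_ceiling_divide_grid_block)
  then have "(\<Sum>k\<in>{k. real k \<le> real n * (real m * h)}. g (nat \<lceil>real k / real n / h\<rceil>) k)
        = g 0 0 + (\<Sum>j<m. \<Sum>k\<in>grid_block n h j. g (Suc j) k)" for n
    using \<open>0 < h\<close> by (simp add: sum_split_grid_blocks)
  then have eq: "(1 / real n) * (\<Sum>k\<in>{k. real k \<le> real n * (real m * h)}. g (nat \<lceil>real k / real n / h\<rceil>) k)
        = g 0 0 / real n + (\<Sum>j<m. (1 / real n) * (\<Sum>k\<in>grid_block n h j. g (Suc j) k))" for n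
    by (simp add: distrib_left sum_distrib_left)
  have "(\<lambda>n. g 0 0 / real n + (\<Sum>j<m. (1 / real n) * (\<Sum>k\<in>grid_block n h j. g (Suc j) k)))
          \<longlonglongrightarrow> 0 + (\<Sum>j<m. h * G (Suc j))"
    using \<open>0 < h\<close>
    by (intro tendsto_add lim_const_over_n tendsto_sum LIMSEQ_grid_block_average lim) simp
  then show ?thesis
    unfolding eq by simp
qed

section \<open>Riemann sums of ergodic averages\<close>

lemma card_nat_le_real:
  assumes "0 \<le> y"
  shows "real (card {k::nat. real k \<le> y}) \<le> y + 1"
  using assms by (simp add: nat_le_real_eq_lessThan)

lemma abs_scaled_average_diff_le:
  fixes g g' :: "nat \<Rightarrow> real"
  assumes "0 \<le> T" and "0 < n" and close: "\<And>k. real k \<le> real n * T \<Longrightarrow> \<bar>g k - g' k\<bar> \<le> \<epsilon>"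
  shows "\<bar>(1 / real n) * (\<Sum>k\<in>{k. real k \<le> real n * T}. g k)
          - (1 / real n) * (\<Sum>k\<in>{k. real k \<le> real n * T}. g' k)\<bar> \<le> (T + 1) * \<epsilon>"
proof -
  let ?C = "{k. real k \<le> real n * T}"
  have "0 \<le> \<epsilon>"
    using close[of 0] \<open>0 \<le> T\<close> by (simp add: order_trans[OF abs_ge_zero])
  have "\<bar>(1 / real n) * (\<Sum>k\<in>?C. g k) - (1 / real n) * (\<Sum>k\<in>?C. g' k)\<bar>
      = (1 / real n) * \<bar>\<Sum>k\<in>?C. g k - g' k\<bar>"
    by (simp add: sum_subtractf abs_divide flip: diff_divide_distrib)
  also have "\<dots> \<le> (1 / real n) * (\<Sum>k\<in>?C. \<epsilon>)"
    using close by (intro mult_left_mono order_trans[OF sum_abs sum_mono]) auto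
  also have "\<dots> \<le> (1 / real n) * ((real n * T + 1) * \<epsilon>)"
    using card_nat_le_real[of "real n * T"] \<open>0 \<le> T\<close> \<open>0 \<le> \<epsilon>\<close>
    by (intro mult_left_mono) (simp_all add: mult_right_mono)
  also have "\<dots> \<le> (T + 1) * \<epsilon>"
    using mult_left_mono[of 1 "real n" \<epsilon>] \<open>0 < n\<close> \<open>0 \<le> \<epsilon>\<close> by (simp add: field_simps)
  finally show ?thesis .
qed

lemma nat_ceiling_divide_bounds:
  assumes "0 < h" and "t \<in> {0..real m * h}"
  shows "nat \<lceil>t / h\<rceil> \<le> m" and "\<bar>t - real (nat \<lceil>t / h\<rceil>) * h\<bar> \<le> h"
proof -
  have "0 \<le> t / h" "t / h \<le> real m"
    using assms by (simp_all add: field_simps)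
  then show "nat \<lceil>t / h\<rceil> \<le> m"
    by (simp add: ceiling_le_iff nat_le_iff)
  have "real (nat \<lceil>t / h\<rceil>) = real_of_int \<lceil>t / h\<rceil>"
    using \<open>0 \<le> t / h\<close> by simp
  then have "t / h \<le> real (nat \<lceil>t / h\<rceil>)" "real (nat \<lceil>t / h\<rceil>) < t / h + 1"
    by linarith+
  then show "\<bar>t - real (nat \<lceil>t / h\<rceil>) * h\<bar> \<le> h"
    using \<open>0 < h\<close> by (simp add: field_simps abs_le_iff)
qed

lemma grid_approximation:
  fixes p :: "real \<Rightarrow> 'v::metric_space"
  assumes "0 < T" and "continuous_on {0..T} p" and "0 < \<delta>"
    and dense: "\<And>x \<epsilon>. 0 < \<epsilon> \<Longrightarrow> \<exists>y\<in>D. dist y x < \<epsilon>"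
  obtains h :: real and m :: nat and y :: "nat \<Rightarrow> 'v"
  where "0 < h" and "real m * h = T" and "\<And>j. y j \<in> D"
    and "\<And>t j. t \<in> {0..T} \<Longrightarrow> j \<le> m \<Longrightarrow> \<bar>t - real j * h\<bar> \<le> h \<Longrightarrow> dist (p t) (y j) < \<delta>"
proof -
  have "0 < \<delta> / 2"
    using \<open>0 < \<delta>\<close> by simp
  then obtain d where "0 < d"
    and p_close: "\<And>s t. s \<in> {0..T} \<Longrightarrow> t \<in> {0..T} \<Longrightarrow> dist t s < d \<Longrightarrow> dist (p t) (p s) < \<delta> / 2"
    using compact_uniformly_continuous[OF assms(2) compact_Icc] unfolding uniformly_continuous_on_def by blast
  obtain m :: nat where "T / d < real m"
    using reals_Archimedean2 by blast
  then have "0 < m"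
    using \<open>0 < T\<close> \<open>0 < d\<close> by (cases m) (auto simp: field_simps)
  define h where "h = T / real m"
  have "0 < h" "h < d" and T_eq: "real m * h = T"
    using \<open>0 < m\<close> \<open>T / d < real m\<close> \<open>0 < T\<close> \<open>0 < d\<close> by (auto simp: h_def field_simps)
  have "\<forall>j. \<exists>z. z \<in> D \<and> dist z (p (real j * h)) < \<delta> / 2"
    using dense[OF \<open>0 < \<delta> / 2\<close>] by blast
  then obtain y where y_in: "\<And>j. y j \<in> D" and y_close: "\<And>j. dist (y j) (p (real j * h)) < \<delta> / 2"
    by metis
  have "dist (p t) (y j) < \<delta>" if "t \<in> {0..T}" "j \<le> m" "\<bar>t - real j * h\<bar> \<le> h" for t j
  proof -
    have "real j * h \<in> {0..T}"
      using \<open>j \<le> m\<close> \<open>0 < h\<close> T_eq by (auto intro: mult_right_mono[THEN order_trans])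
    moreover have "dist t (real j * h) < d"
      using that(3) \<open>h < d\<close> by (simp add: dist_real_def)
    ultimately have "dist (p t) (p (real j * h)) < \<delta> / 2"
      using p_close that(1) by blast
    then show ?thesis
      using y_close[of j] dist_triangle[of "p t" "y j" "p (real j * h)"] by (simp add: dist_commute)
  qed
  with that \<open>0 < h\<close> T_eq y_in show ?thesis by blast
qed

lemma uniformly_continuous_on_if_dominated:
  fixes f :: "'v::metric_space \<Rightarrow> 'b \<Rightarrow> real" and F :: "'v \<Rightarrow> real"
  assumes equicont: "\<And>\<epsilon>. 0 < \<epsilon> \<Longrightarrow> \<exists>\<delta>>0. \<forall>a b y. dist a b < \<delta> \<longrightarrow> \<bar>f a y - f b y\<bar> \<le> \<epsilon>"
    and dominated: "\<And>a b \<epsilon>. (\<And>y. \<bar>f a y - f b y\<bar> \<le> \<epsilon>) \<Longrightarrow> \<bar>F a - F b\<bar> \<le> \<epsilon>"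
  shows "uniformly_continuous_on UNIV F"
  unfolding uniformly_continuous_on_def
proof (intro allI impI)
  fix r :: real assume "0 < r"
  then obtain \<delta> where "0 < \<delta>" and "\<forall>a b y. dist a b < \<delta> \<longrightarrow> \<bar>f a y - f b y\<bar> \<le> r / 2"
    using equicont[of "r / 2"] by auto
  then have "dist (F a) (F b) < r" if "dist a b < \<delta>" for a b
    using dominated[of a b "r / 2"] that \<open>0 < r\<close> by (simp add: dist_real_def)
  with \<open>0 < \<delta>\<close> show "\<exists>d>0. \<forall>x\<in>UNIV. \<forall>x'\<in>UNIV. dist x' x < d \<longrightarrow> dist (F x') (F x) < r"
    by blast
qed

lemma abs_integral_diff_step_sum_le:
  fixes \<phi> :: "real \<Rightarrow> real"
  assumes "0 \<le> h" and "continuous_on {0..real m * h} \<phi>"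
    and "\<And>j t. j < m \<Longrightarrow> t \<in> {real j * h..real (Suc j) * h} \<Longrightarrow> \<bar>\<phi> t - c j\<bar> \<le> \<epsilon>"
  shows "\<bar>integral {0..real m * h} \<phi> - (\<Sum>j<m. h * c j)\<bar> \<le> real m * h * \<epsilon>"
  using assms(2,3)
proof (induction m)
  case (Suc m)
  let ?a = "real m * h" and ?b = "real (Suc m) * h"
  have "0 \<le> ?a" "?a \<le> ?b"
    using \<open>0 \<le> h\<close> by (simp_all add: mult_right_mono)
  have IH: "\<bar>integral {0..?a} \<phi> - (\<Sum>j<m. h * c j)\<bar> \<le> ?a * \<epsilon>"
    using Suc.prems \<open>?a \<le> ?b\<close> by (intro Suc.IH) (auto elim: continuous_on_subset)
  have cont: "continuous_on {?a..?b} \<phi>"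
    by (rule continuous_on_subset[OF Suc.prems(1)]) (use \<open>0 \<le> ?a\<close> in auto)
  have "integral {?a..?b} (\<lambda>t. \<phi> t - c m) = integral {?a..?b} \<phi> - integral {?a..?b} (\<lambda>t. c m)"
    by (rule integral_diff[OF integrable_continuous_interval[OF cont] integrable_const_ivl])
  also have "integral {?a..?b} (\<lambda>t. c m) = h * c m"
    using \<open>?a \<le> ?b\<close> by (simp add: algebra_simps)
  finally have "integral {?a..?b} (\<lambda>t. \<phi> t - c m) = integral {?a..?b} \<phi> - h * c m" .
  moreover have "norm (integral {?a..?b} (\<lambda>t. \<phi> t - c m)) \<le> \<epsilon> * (?b - ?a)"
    using \<open>?a \<le> ?b\<close> cont Suc.prems(2)[of m] by (intro integral_bound continuous_intros) auto
  ultimately have last: "\<bar>integral {?a..?b} \<phi> - h * c m\<bar> \<le> h * \<epsilon>"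
    by (simp add: algebra_simps)
  have "integral {0..?b} \<phi> = integral {0..?a} \<phi> + integral {?a..?b} \<phi>"
    using \<open>0 \<le> ?a\<close> \<open>?a \<le> ?b\<close> Suc.prems(1)
    by (intro Henstock_Kurzweil_Integration.integral_combine[symmetric] integrable_continuous_interval)
  then show ?case
    using IH last by (simp add: algebra_simps)
qed simp

lemma LIMSEQ_by_approximation:
  fixes a :: "nat \<Rightarrow> real"
  assumes "\<And>\<epsilon>. 0 < \<epsilon> \<Longrightarrow> \<exists>b c'. b \<longlonglongrightarrow> c' \<and> (\<forall>\<^sub>F n in sequentially. \<bar>a n - b n\<bar> \<le> \<epsilon>) \<and> \<bar>c - c'\<bar> \<le> \<epsilon>"
  shows "a \<longlonglongrightarrow> c"
proof (rule tendstoI)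
  fix r :: real assume "0 < r"
  then obtain b c' where b: "b \<longlonglongrightarrow> c'" "\<forall>\<^sub>F n in sequentially. \<bar>a n - b n\<bar> \<le> r / 4" "\<bar>c - c'\<bar> \<le> r / 4"
    using assms[of "r / 4"] by auto
  have "\<forall>\<^sub>F n in sequentially. dist (b n) c' < r / 4"
    using tendstoD[OF b(1), of "r / 4"] \<open>0 < r\<close> by simp
  with b(2) show "\<forall>\<^sub>F n in sequentially. dist (a n) c < r"
  proof eventually_elim
    case (elim n)
    with b(3) show ?case unfolding dist_real_def by linarith
  qed
qed

lemma abs_integral_diff_grid_sum_le:
  fixes \<phi> :: "real \<Rightarrow> real"
  assumes "0 < h" and T_eq: "real m * h = T" and "continuous_on {0..T} \<phi>"
    and close: "\<And>t j. t \<in> {0..T} \<Longrightarrow> j \<le> m \<Longrightarrow> \<bar>t - real j * h\<bar> \<le> h \<Longrightarrow> \<bar>\<phi> t - c j\<bar> \<le> \<epsilon>"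
  shows "\<bar>integral {0..T} \<phi> - (\<Sum>j<m. h * c (Suc j))\<bar> \<le> T * \<epsilon>"
  unfolding T_eq[symmetric]
proof (rule abs_integral_diff_step_sum_le)
  fix j t assume "j < m" and t: "t \<in> {real j * h..real (Suc j) * h}"
  have "0 \<le> real j * h" "real (Suc j) * h \<le> real m * h"
    using \<open>0 < h\<close> \<open>j < m\<close> by (simp_all add: mult_right_mono)
  with t T_eq have "t \<in> {0..T}"
    unfolding atLeastAtMost_iff by linarith
  moreover have "\<bar>t - real (Suc j) * h\<bar> \<le> h"
    using t by (simp add: abs_le_iff algebra_simps)
  ultimately show "\<bar>\<phi> t - c (Suc j)\<bar> \<le> \<epsilon>"
    using \<open>j < m\<close> by (intro close) auto
qed (use assms in simp_all)

lemma eventually_abs_riemann_average_diff_le: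
  fixes f :: "'v::metric_space \<Rightarrow> real \<Rightarrow> real" and u :: "nat \<Rightarrow> real \<Rightarrow> 'v"
  assumes "0 \<le> T" and u: "uniform_limit {0..T} u p sequentially" and "0 < \<delta>"
    and close: "\<And>t. t \<in> {0..T} \<Longrightarrow> dist (p t) (q t) < \<delta>"
    and f_close: "\<And>a b y. dist a b < 2 * \<delta> \<Longrightarrow> \<bar>f a y - f b y\<bar> \<le> \<epsilon>"
  shows "\<forall>\<^sub>F n in sequentially.
           \<bar>(1 / real n) * (\<Sum>k\<in>{k. real k \<le> real n * T}. f (u n (real k / real n)) (e k))
            - (1 / real n) * (\<Sum>k\<in>{k. real k \<le> real n * T}. f (q (real k / real n)) (e k))\<bar>
           \<le> (T + 1) * \<epsilon>"
proof -
  have "\<forall>\<^sub>F n in sequentially. (\<forall>t\<in>{0..T}. dist (u n t) (p t) < \<delta>) \<and> 0 < n"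
    using uniform_limitD[OF u \<open>0 < \<delta>\<close>] eventually_gt_at_top[of 0]
    by (simp add: eventually_conj_iff)
  then show ?thesis
  proof eventually_elim
    case (elim n)
    have "\<bar>f (u n t) z - f (q t) z\<bar> \<le> \<epsilon>" if t: "t \<in> {0..T}" for t z
    proof (rule f_close)
      have "dist (u n t) (q t) \<le> dist (u n t) (p t) + dist (p t) (q t)"
        by (rule dist_triangle)
      also have "\<dots> < \<delta> + \<delta>"
        using elim t close[OF t] by (intro add_strict_mono) auto
      finally show "dist (u n t) (q t) < 2 * \<delta>" by simp
    qed
    moreover have "real k / real n \<in> {0..T}" if "real k \<le> real n * T" for k
      using that elim by (simp add: field_simps)
    ultimately show ?case
      using \<open>0 \<le> T\<close> elim by (intro abs_scaled_average_diff_le) auto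
  qed
qed

lemma LIMSEQ_riemann_average_uniform_limit:
  fixes f :: "'v::metric_space \<Rightarrow> real \<Rightarrow> real" and F :: "'v \<Rightarrow> real"
    and u :: "nat \<Rightarrow> real \<Rightarrow> 'v" and p :: "real \<Rightarrow> 'v" and e :: "nat \<Rightarrow> real"
  assumes "0 < T"
    and equicont: "\<And>\<epsilon>. 0 < \<epsilon> \<Longrightarrow> \<exists>\<delta>>0. \<forall>a b y. dist a b < \<delta> \<longrightarrow> \<bar>f a y - f b y\<bar> \<le> \<epsilon>"
    and dominated: "\<And>a b \<epsilon>. (\<And>y. \<bar>f a y - f b y\<bar> \<le> \<epsilon>) \<Longrightarrow> \<bar>F a - F b\<bar> \<le> \<epsilon>"
    and dense: "\<And>x \<epsilon>. 0 < \<epsilon> \<Longrightarrow> \<exists>y\<in>D. dist y x < \<epsilon>"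
    and average: "\<And>y. y \<in> D \<Longrightarrow> (\<lambda>N. (1 / real N) * (\<Sum>k<N. f y (e k))) \<longlonglongrightarrow> F y"
    and p: "continuous_on {0..T} p"
    and u: "uniform_limit {0..T} u p sequentially"
  shows "(\<lambda>n. (1 / real n) * (\<Sum>k\<in>{k. real k \<le> real n * T}. f (u n (real k / real n)) (e k)))
           \<longlonglongrightarrow> integral {0..T} (\<lambda>t. F (p t))"
proof (rule LIMSEQ_by_approximation)
  fix \<epsilon> :: real assume "0 < \<epsilon>"
  define \<epsilon>' where "\<epsilon>' = \<epsilon> / (T + 1)"
  have "0 < \<epsilon>'" and \<epsilon>'_eq: "(T + 1) * \<epsilon>' = \<epsilon>"
    using \<open>0 < \<epsilon>\<close> \<open>0 < T\<close> by (simp_all add: \<epsilon>'_def)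
  obtain \<delta> where "0 < \<delta>" and f_close: "\<And>a b y. dist a b < \<delta> \<Longrightarrow> \<bar>f a y - f b y\<bar> \<le> \<epsilon>'"
    using equicont[OF \<open>0 < \<epsilon>'\<close>] by blast
  have "0 < \<delta> / 2"
    using \<open>0 < \<delta>\<close> by simp
  then obtain h m y where "0 < h" and T_eq: "real m * h = T" and y_in: "\<And>j. y j \<in> D"
    and near: "\<And>t j. t \<in> {0..T} \<Longrightarrow> j \<le> m \<Longrightarrow> \<bar>t - real j * h\<bar> \<le> h \<Longrightarrow> dist (p t) (y j) < \<delta> / 2"
    using grid_approximation[OF \<open>0 < T\<close> p _ dense] by blast
  define J where "J t = nat \<lceil>t / h\<rceil>" for t
  have "dist (p t) (y (J t)) < \<delta> / 2" if "t \<in> {0..T}" for t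
    using nat_ceiling_divide_bounds[OF \<open>0 < h\<close>, of t m] that near[OF that]
    unfolding J_def T_eq by blast
  then have "\<forall>\<^sub>F n in sequentially.
      \<bar>(1 / real n) * (\<Sum>k\<in>{k. real k \<le> real n * T}. f (u n (real k / real n)) (e k))
       - (1 / real n) * (\<Sum>k\<in>{k. real k \<le> real n * T}. f (y (J (real k / real n))) (e k))\<bar> \<le> \<epsilon>"
    unfolding \<epsilon>'_eq[symmetric] using \<open>0 < T\<close> \<open>0 < \<delta> / 2\<close> f_close
    by (intro eventually_abs_riemann_average_diff_le[where \<delta> = "\<delta> / 2", OF _ u]) auto
  moreover have "(\<lambda>n. (1 / real n) * (\<Sum>k\<in>{k. real k \<le> real n * T}. f (y (J (real k / real n))) (e k)))
      \<longlonglongrightarrow> (\<Sum>j<m. h * F (y (Suc j)))"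
    using LIMSEQ_step_average[where g = "\<lambda>j k. f (y j) (e k)" and G = "\<lambda>j. F (y j)" and m = m,
        OF \<open>0 < h\<close> average[OF y_in]]
    by (simp add: J_def T_eq)
  moreover have "\<bar>integral {0..T} (\<lambda>t. F (p t)) - (\<Sum>j<m. h * F (y (Suc j)))\<bar> \<le> \<epsilon>"
  proof -
    have "continuous_on {0..T} (\<lambda>t. F (p t))"
      using uniformly_continuous_on_if_dominated[where f = f and F = F, OF equicont dominated]
      by (intro continuous_on_compose2[OF uniformly_continuous_imp_continuous p]) auto
    then have "\<bar>integral {0..T} (\<lambda>t. F (p t)) - (\<Sum>j<m. h * F (y (Suc j)))\<bar> \<le> T * \<epsilon>'"
      using \<open>0 < \<delta>\<close>
      by (intro abs_integral_diff_grid_sum_le[OF \<open>0 < h\<close> T_eq] dominated f_close order.strict_trans[OF near]) auto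
    also have "\<dots> \<le> \<epsilon>"
      using \<epsilon>'_eq \<open>0 < \<epsilon>'\<close> by (simp add: algebra_simps)
    finally show ?thesis .
  qed
  ultimately show "\<exists>b c. b \<longlonglongrightarrow> c
      \<and> (\<forall>\<^sub>F n in sequentially. \<bar>(1 / real n) * (\<Sum>k\<in>{k. real k \<le> real n * T}. f (u n (real k / real n)) (e k)) - b n\<bar> \<le> \<epsilon>)
      \<and> \<bar>integral {0..T} (\<lambda>t. F (p t)) - c\<bar> \<le> \<epsilon>"
    by blast
qed

lemma uniformly_continuous_on_imp_equicontinuous_fst:
  fixes f :: "'a::metric_space \<times> 'b::metric_space \<Rightarrow> real"
  assumes "uniformly_continuous_on UNIV f" and "0 < \<epsilon>"
  shows "\<exists>\<delta>>0. \<forall>a b y. dist a b < \<delta> \<longrightarrow> \<bar>f (a, y) - f (b, y)\<bar> \<le> \<epsilon>"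
proof -
  obtain \<delta> where "0 < \<delta>" and \<delta>: "\<forall>x x'. dist x' x < \<delta> \<longrightarrow> dist (f x') (f x) < \<epsilon>"
    using assms unfolding uniformly_continuous_on_def by blast
  have "\<bar>f (a, y) - f (b, y)\<bar> \<le> \<epsilon>" if "dist a b < \<delta>" for a b y
    using \<delta>[rule_format, of "(a, y)" "(b, y)"] that by (simp add: dist_Pair_Pair dist_real_def)
  with \<open>0 < \<delta>\<close> show ?thesis by blast
qed

lemma (in prob_space) abs_expectation_diff_le:
  fixes X Y :: "'a \<Rightarrow> real"
  assumes "integrable M X" and "integrable M Y" and "\<And>\<omega>. \<omega> \<in> space M \<Longrightarrow> \<bar>X \<omega> - Y \<omega>\<bar> \<le> \<epsilon>"
  shows "\<bar>expectation X - expectation Y\<bar> \<le> \<epsilon>"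
proof -
  have "\<bar>expectation (\<lambda>\<omega>. X \<omega> - Y \<omega>)\<bar> \<le> expectation (\<lambda>\<omega>. \<bar>X \<omega> - Y \<omega>\<bar>)"
    by (rule integral_abs_bound)
  also have "\<dots> \<le> expectation (\<lambda>\<omega>. \<epsilon>)"
    using assms by (intro integral_mono) auto
  finally show ?thesis
    using assms(1,2) by (simp add: prob_space)
qed

lemma AE_time_averages_countable:
  fixes f :: "'v \<Rightarrow> real \<Rightarrow> real"
  assumes "prob_space M" and "stationary_seq M \<eta>" and "ergodic_seq M \<eta>" and "countable D"
    and "\<And>y. f y \<in> borel_measurable borel" and "\<And>y z. \<bar>f y z\<bar> \<le> B"
  shows "AE \<omega> in M. \<forall>y\<in>D. (\<lambda>N. (1 / real N) * (\<Sum>k<N. f y (\<eta> k \<omega>)))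
           \<longlonglongrightarrow> prob_space.expectation M (\<lambda>\<omega>. f y (\<eta> 0 \<omega>))"
  unfolding AE_ball_countable[OF \<open>countable D\<close>]
proof
  fix y
  show "AE \<omega> in M. (\<lambda>N. (1 / real N) * (\<Sum>k<N. f y (\<eta> k \<omega>)))
      \<longlonglongrightarrow> prob_space.expectation M (\<lambda>\<omega>. f y (\<eta> 0 \<omega>))"
    using birkhoff_ergodic_bounded[OF assms(1-3,5), of y B] assms(6)
    by (simp add: time_average_def)
qed

theorem AE_riemann_average_ergodic:
  fixes f :: "'v::{metric_space, second_countable_topology} \<times> real \<Rightarrow> real"
    and u :: "nat \<Rightarrow> real \<Rightarrow> 'a \<Rightarrow> 'v" and p :: "real \<Rightarrow> 'a \<Rightarrow> 'v"
  assumes "prob_space M" and "stationary_seq M \<eta>" and "ergodic_seq M \<eta>"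
    and "bounded (range f)" and "uniformly_continuous_on UNIV f" and "0 < T"
    and u_cont: "\<And>n \<omega>. \<omega> \<in> space M \<Longrightarrow> continuous_on {0..T} (\<lambda>t. u n t \<omega>)"
    and "AE \<omega> in M. uniform_limit {0..T} (\<lambda>n t. u n t \<omega>) (\<lambda>t. p t \<omega>) sequentially"
  shows "AE \<omega> in M. (\<lambda>n. (1 / real n) * (\<Sum>k\<in>{k. real k \<le> real n * T}. f (u n (real k / real n) \<omega>, \<eta> k \<omega>)))
           \<longlonglongrightarrow> integral {0..T} (\<lambda>t. prob_space.expectation M (\<lambda>\<omega>'. f (p t \<omega>, \<eta> 0 \<omega>')))"
proof -
  interpret prob_space M by fact
  note [measurable] = stationary_seq_measurable[OF assms(2)]
  obtain B where B: "\<And>z. \<bar>f z\<bar> \<le> B"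
    using assms(4) unfolding bounded_iff by auto
  define F where "F a = expectation (\<lambda>\<omega>. f (a, \<eta> 0 \<omega>))" for a
  have "continuous_on UNIV (\<lambda>z. f (a, z))" for a
    by (rule continuous_on_compose2[OF uniformly_continuous_imp_continuous[OF assms(5)]])
      (auto intro: continuous_intros)
  then have [measurable]: "(\<lambda>z. f (a, z)) \<in> borel_measurable borel" for a
    by (rule borel_measurable_continuous_onI)
  have integrable: "integrable M (\<lambda>\<omega>. f (a, \<eta> 0 \<omega>))" for a
    using B by (intro integrable_const_bound[where B = B]) auto
  have dominated: "\<bar>F a - F b\<bar> \<le> \<epsilon>" if "\<And>y. \<bar>f (a, y) - f (b, y)\<bar> \<le> \<epsilon>" for a b \<epsilon>
    unfolding F_def using that by (intro abs_expectation_diff_le[OF integrable integrable])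
  obtain D :: "'v set" where "countable D" and D: "\<And>X. open X \<Longrightarrow> X \<noteq> {} \<Longrightarrow> \<exists>y\<in>D. y \<in> X"
    by (rule countable_dense_setE) blast
  have dense: "\<exists>y\<in>D. dist y x < \<epsilon>" if "0 < \<epsilon>" for x and \<epsilon> :: real
    using D[of "ball x \<epsilon>"] that by (auto simp: dist_commute)
  have "AE \<omega> in M. \<forall>y\<in>D. (\<lambda>N. (1 / real N) * (\<Sum>k<N. f (y, \<eta> k \<omega>))) \<longlonglongrightarrow> F y"
    unfolding F_def
    by (rule AE_time_averages_countable[where f = "\<lambda>a z. f (a, z)" and B = B, OF assms(1-3) \<open>countable D\<close>])
      (simp_all add: B)
  with assms(8) AE_space show ?thesis
  proof eventually_elim
    case (elim \<omega>)
    have "continuous_on {0..T} (\<lambda>t. p t \<omega>)"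
      using u_cont[OF \<open>\<omega> \<in> space M\<close>] by (intro uniform_limit_theorem[OF always_eventually elim(1)]) simp_all
    with elim show ?case
      using LIMSEQ_riemann_average_uniform_limit[where f = "\<lambda>a y. f (a, y)" and F = F and e = "\<lambda>k. \<eta> k \<omega>",
          OF \<open>0 < T\<close> uniformly_continuous_on_imp_equicontinuous_fst[OF assms(5)] dominated dense]
      by (simp add: F_def)
  qed
qed

theorem lemma3:
  fixes M :: "'a measure"
    and f :: "(real^('d::finite)) \<times> real \<Rightarrow> real"
    and \<eta> :: "nat \<Rightarrow> 'a \<Rightarrow> real"
    and \<xi>n :: "nat \<Rightarrow> real \<Rightarrow> 'a \<Rightarrow> real^'d"
    and \<xi> :: "real \<Rightarrow> 'a \<Rightarrow> real^'d"
  assumes "prob_space M"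
    and "bounded (range f)"
    and "uniformly_continuous_on UNIV f"
    and "stationary_seq M \<eta>"
    and "ergodic_seq M \<eta>"
    and "\<And>n t. \<xi>n n t \<in> borel_measurable M"
    and "\<And>n \<omega>. \<omega> \<in> space M \<Longrightarrow> continuous_on {0..} (\<lambda>t. \<xi>n n t \<omega>)"
    and "\<And>t. \<xi> t \<in> borel_measurable M"
    and "\<And>T. T > 0 \<Longrightarrow>
           AE \<omega> in M. uniform_limit {0..T} (\<lambda>n t. \<xi>n n t \<omega>) (\<lambda>t. \<xi> t \<omega>) sequentially"
  shows "\<forall>T>0. AE \<omega> in M.
           (\<lambda>n. (1 / real n) * (\<Sum>k \<in> {k. real k \<le> real n * T}. f (\<xi>n n (real k / real n) \<omega>, \<eta> k \<omega>)))
             \<longlonglongrightarrow> integral {0..T} (\<lambda>t. prob_space.expectation M (\<lambda>\<omega>'. f (\<xi> t \<omega>, \<eta> 0 \<omega>')))"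
proof (intro allI impI)
  fix T :: real assume "0 < T"
  have "continuous_on {0..T} (\<lambda>t. \<xi>n n t \<omega>)" if "\<omega> \<in> space M" for n \<omega>
    by (rule continuous_on_subset[OF assms(7)[OF that]]) auto
  from AE_riemann_average_ergodic[OF assms(1,4,5,2,3) \<open>0 < T\<close> this assms(9)[OF \<open>0 < T\<close>]]
  show "AE \<omega> in M.
      (\<lambda>n. (1 / real n) * (\<Sum>k \<in> {k. real k \<le> real n * T}. f (\<xi>n n (real k / real n) \<omega>, \<eta> k \<omega>)))
        \<longlonglongrightarrow> integral {0..T} (\<lambda>t. prob_space.expectation M (\<lambda>\<omega>'. f (\<xi> t \<omega>, \<eta> 0 \<omega>')))" .
qed

end
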